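(* Let $U_1,\dots,U_n$ be unitary operators on a Hilbert space and let ${\bf U}=U_n U_{n-1}\cdots U_1$. Suppose each $U_i$ is split as $U_i=G_i+B_i$, where $G_i,B_i$ are bounded operators (not necessarily unitary) with $\|B_i\|\le\epsilon$, so that $\|G_i\|\le 1+\epsilon$. Fix an integer $1\le k\le n$. Expanding the product ${\bf U}=\prod_{i}(G_i+B_i)$ into the $2^n$ ordered products, let ${\bf B}$ be the sum of all those products that contain at least $k$ factors of the form $B_i$, and ${\bf G}={\bf U}-{\bf B}$. Then $$\|{\bf B}\|\le \binom{n}{k}\epsilon^k(1+\epsilon)^{n-k}.$$ If moreover every $G_i$ is unitary, then $$\|{\bf B}\|\le \binom{n}{k}\epsilon^k.$$
   Context: $\|\cdot\|$ denotes the operator norm $\|A\|=\max_{\|\psi\|=1}\|A\psi\|$. *)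

theory Defs
  imports "HOL-Analysis.Analysis"
begin

text \<open>A unitary operator on a (real) Hilbert space: a bounded linear operator
  that is a surjective isometry (equivalently U* U = U U* = I).\<close>
definition unitary_op :: "('a::{real_inner,complete_space} \<Rightarrow>\<^sub>L 'a) \<Rightarrow> bool" where
  "unitary_op U \<longleftrightarrow> (\<forall>x. norm (blinfun_apply U x) = norm x) \<and> surj (blinfun_apply U)"

fun ord_prod :: "(nat \<Rightarrow> ('a::real_normed_vector \<Rightarrow>\<^sub>L 'a)) \<Rightarrow> nat \<Rightarrow> ('a \<Rightarrow>\<^sub>L 'a)" where
  "ord_prod F 0 = id_blinfun"
| "ord_prod F (Suc m) = F (Suc m) o\<^sub>L ord_prod F m"

text \<open>Sum of all ordered products in the expansion of prod_i (G i + B i), i = 1..n,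
  that contain at least k factors B i. S is the set of positions where B is chosen.\<close>
definition bad_part :: "(nat \<Rightarrow> ('a::real_normed_vector \<Rightarrow>\<^sub>L 'a)) \<Rightarrow> (nat \<Rightarrow> ('a \<Rightarrow>\<^sub>L 'a)) \<Rightarrow> nat \<Rightarrow> nat \<Rightarrow> ('a \<Rightarrow>\<^sub>L 'a)" where
  "bad_part G B n k = (\<Sum>S\<in>{S. S \<subseteq> {1..n} \<and> k \<le> card S}.
       ord_prod (\<lambda>i. if i \<in> S then B i else G i) n)"

end

theory Submission
  imports Defs
begin

text \<open>Splitting the expansion according to the factor chosen at the last position gives
  the Pascal-type recursion
  \<open>bad_part (n+1) k = B (n+1) o bad_part n (k-1) + G (n+1) o bad_part n k\<close>,
  with \<open>bad_part n 0 = U n o ... o U 1\<close> of norm at most 1. By submultiplicativity,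
  the triangle inequality and Pascal's rule, induction on \<open>n\<close> gives
  \<open>norm (bad_part n k) \<le> (n choose k) * \<epsilon>^k * g^(n-k)\<close> whenever every \<open>G i\<close>
  has norm at most \<open>g \<ge> 1\<close>; take \<open>g = 1 + \<epsilon>\<close> in general and \<open>g = 1\<close> when the
  \<open>G i\<close> are unitary.\<close>

lemma sum_subsets_card_ge_insert:
  assumes "finite A" "a \<notin> A"
  shows "(\<Sum>S\<in>{S. S \<subseteq> insert a A \<and> k \<le> card S}. f S)
       = (\<Sum>T\<in>{T. T \<subseteq> A \<and> k - 1 \<le> card T}. f (insert a T))
       + (\<Sum>T\<in>{T. T \<subseteq> A \<and> k \<le> card T}. f T)"
proof -
  let ?with_a = "{T. T \<subseteq> A \<and> k - 1 \<le> card T}" and ?without_a = "{T. T \<subseteq> A \<and> k \<le> card T}"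
  have fin: "finite {T. T \<subseteq> A \<and> P T}" for P
    using \<open>finite A\<close> by auto
  have card_insert: "card (insert a T) = Suc (card T)" if "T \<subseteq> A" for T
    using that assms finite_subset by (metis card_insert_disjoint subsetD)
  have split: "{S. S \<subseteq> insert a A \<and> k \<le> card S} = insert a ` ?with_a \<union> ?without_a"
  proof (intro equalityI subsetI)
    fix S assume S: "S \<in> {S. S \<subseteq> insert a A \<and> k \<le> card S}"
    show "S \<in> insert a ` ?with_a \<union> ?without_a"
    proof (cases "a \<in> S")
      case True
      with S have "S - {a} \<in> ?with_a" "S = insert a (S - {a})"
        using card_insert[of "S - {a}"] by auto
      then show ?thesis by blast
    qed (use S in auto)
  qed (use card_insert in auto)
  have "inj_on (insert a) ?with_a"
    using assms by (auto simp: inj_on_def)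
  then show ?thesis
    unfolding split using assms fin
    by (subst sum.union_disjoint) (auto simp: sum.reindex)
qed

lemma ord_prod_cong:
  "(\<And>i. i \<in> {1..n} \<Longrightarrow> F i = F' i) \<Longrightarrow> ord_prod F n = ord_prod F' n"
  by (induction n) auto

lemma bad_part_0: "bad_part G B 0 k = (if k = 0 then id_blinfun else 0)"
proof -
  have "{S. S \<subseteq> {1..0::nat} \<and> k \<le> card S} = (if k = 0 then {{}} else {})"
    by auto
  then show ?thesis
    unfolding bad_part_def by auto
qed

lemma bad_part_Suc:
  "bad_part G B (Suc n) k
     = (B (Suc n) o\<^sub>L bad_part G B n (k - 1)) + (G (Suc n) o\<^sub>L bad_part G B n k)"
proof -
  define F where "F S i = (if i \<in> S then B i else G i)" for S i
  have chosen: "ord_prod (F (insert (Suc n) T)) (Suc n) = B (Suc n) o\<^sub>L ord_prod (F T) n"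
    if "T \<subseteq> {1..n}" for T
    using ord_prod_cong[of n "F (insert (Suc n) T)" "F T"] by (simp add: F_def)
  have not_chosen: "ord_prod (F T) (Suc n) = G (Suc n) o\<^sub>L ord_prod (F T) n"
    if "T \<subseteq> {1..n}" for T
    using that by (auto simp: F_def)
  have "bad_part G B (Suc n) k = (\<Sum>S\<in>{S. S \<subseteq> insert (Suc n) {1..n} \<and> k \<le> card S}.
      ord_prod (F S) (Suc n))"
    unfolding bad_part_def F_def by (simp add: atLeastAtMostSuc_conv)
  also have "\<dots> = (\<Sum>T\<in>{T. T \<subseteq> {1..n} \<and> k - 1 \<le> card T}. B (Suc n) o\<^sub>L ord_prod (F T) n)
      + (\<Sum>T\<in>{T. T \<subseteq> {1..n} \<and> k \<le> card T}. G (Suc n) o\<^sub>L ord_prod (F T) n)"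
    by (subst sum_subsets_card_ge_insert)
      (auto intro!: arg_cong2[where f = "(+)"] sum.cong chosen not_chosen simp del: ord_prod.simps)
  also have "\<dots> = (B (Suc n) o\<^sub>L bad_part G B n (k - 1)) + (G (Suc n) o\<^sub>L bad_part G B n k)"
    unfolding bad_part_def F_def bounded_bilinear.sum_right[OF bounded_bilinear_blinfun_compose] ..
  finally show ?thesis .
qed

lemma pascal_step_with_powers:
  fixes e g :: "'a::comm_semiring_1"
  shows "e * (of_nat (n choose j) * e ^ j * g ^ (n - j))
       + g * (of_nat (n choose Suc j) * e ^ Suc j * g ^ (n - Suc j))
       = of_nat (Suc n choose Suc j) * e ^ Suc j * g ^ (Suc n - Suc j)"
proof (cases "j < n")
  case True
  then have "n - j = Suc (n - Suc j)"
    by simp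
  then show ?thesis
    by (simp add: algebra_simps)
next
  case False
  then show ?thesis
    by (simp add: binomial_eq_0 algebra_simps)
qed

lemma norm_bad_part_le:
  fixes G B :: "nat \<Rightarrow> ('a::real_normed_vector \<Rightarrow>\<^sub>L 'a)"
  assumes sum_le: "\<And>i. i \<in> {1..n} \<Longrightarrow> norm (G i + B i) \<le> 1"
    and B_le: "\<And>i. i \<in> {1..n} \<Longrightarrow> norm (B i) \<le> e"
    and G_le: "\<And>i. i \<in> {1..n} \<Longrightarrow> norm (G i) \<le> g"
    and "1 \<le> g"
  shows "norm (bad_part G B n k) \<le> real (n choose k) * e ^ k * g ^ (n - k)"
  using sum_le B_le G_le
proof (induction n arbitrary: k)
  case 0
  then show ?case
    by (cases k) (auto simp: bad_part_0 norm_blinfun_id_le)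
next
  case (Suc n)
  have IH: "norm (bad_part G B n k') \<le> real (n choose k') * e ^ k' * g ^ (n - k')" for k'
    using Suc by simp
  have last: "norm (G (Suc n) + B (Suc n)) \<le> 1" "norm (B (Suc n)) \<le> e" "norm (G (Suc n)) \<le> g"
    using Suc.prems by auto
  have "0 \<le> e"
    using last(2) norm_ge_zero order_trans by blast
  show ?case
  proof (cases k)
    case 0
    then have "bad_part G B (Suc n) k = (G (Suc n) + B (Suc n)) o\<^sub>L bad_part G B n 0"
      by (simp add: bad_part_Suc bounded_bilinear.add_left[OF bounded_bilinear_blinfun_compose] add.commute)
    also have "norm \<dots> \<le> 1 * g ^ n"
      using IH[of 0] last(1) by (intro order_trans[OF norm_blinfun_compose] mult_mono) auto
    also have "\<dots> \<le> g ^ Suc n"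
      using \<open>1 \<le> g\<close> by simp
    finally show ?thesis
      using 0 by simp
  next
    case (Suc j)
    have "norm (bad_part G B (Suc n) k)
        \<le> norm (B (Suc n)) * norm (bad_part G B n j) + norm (G (Suc n)) * norm (bad_part G B n k)"
      unfolding bad_part_Suc Suc
      by (intro order_trans[OF norm_triangle_ineq] add_mono) (simp_all add: norm_blinfun_compose)
    also have "\<dots> \<le> e * (real (n choose j) * e ^ j * g ^ (n - j))
        + g * (real (n choose k) * e ^ k * g ^ (n - k))"
      using IH last(2,3) \<open>0 \<le> e\<close> \<open>1 \<le> g\<close> by (intro add_mono mult_mono) auto
    also have "\<dots> = real (Suc n choose k) * e ^ k * g ^ (Suc n - k)"
      unfolding Suc by (rule pascal_step_with_powers)
    finally show ?thesis .
  qed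
qed

lemma norm_unitary_op_le:
  assumes "unitary_op U"
  shows "norm U \<le> 1"
  using assms unfolding unitary_op_def by (intro norm_blinfun_bound) auto

theorem lemma1:
  fixes U G B :: "nat \<Rightarrow> ('a::{real_inner,complete_space} \<Rightarrow>\<^sub>L 'a)"
    and n k :: nat and \<epsilon> :: real
  assumes unitary: "\<And>i. i \<in> {1..n} \<Longrightarrow> unitary_op (U i)"
    and split: "\<And>i. i \<in> {1..n} \<Longrightarrow> U i = G i + B i"
    and small: "\<And>i. i \<in> {1..n} \<Longrightarrow> norm (B i) \<le> \<epsilon>"
    and k: "1 \<le> k" "k \<le> n"
  shows "norm (bad_part G B n k) \<le> real (n choose k) * \<epsilon> ^ k * (1 + \<epsilon>) ^ (n - k)
     \<and> ((\<forall>i\<in>{1..n}. unitary_op (G i)) \<longrightarrow> norm (bad_part G B n k) \<le> real (n choose k) * \<epsilon> ^ k)"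
proof (intro conjI impI)
  have "0 \<le> \<epsilon>"
    using order_trans[OF norm_ge_zero small[of 1]] k by simp
  have U_le: "norm (G i + B i) \<le> 1" if "i \<in> {1..n}" for i
    using norm_unitary_op_le[OF unitary[OF that]] split[OF that] by simp
  have "norm (G i) \<le> 1 + \<epsilon>" if "i \<in> {1..n}" for i
    using norm_triangle_ineq4[of "G i + B i" "B i"] U_le[OF that] small[OF that] by simp
  then show "norm (bad_part G B n k) \<le> real (n choose k) * \<epsilon> ^ k * (1 + \<epsilon>) ^ (n - k)"
    using U_le small \<open>0 \<le> \<epsilon>\<close> by (intro norm_bad_part_le) simp_all
  assume "\<forall>i\<in>{1..n}. unitary_op (G i)"
  then have "norm (bad_part G B n k) \<le> real (n choose k) * \<epsilon> ^ k * 1 ^ (n - k)"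
    by (intro norm_bad_part_le U_le small norm_unitary_op_le) auto
  then show "norm (bad_part G B n k) \<le> real (n choose k) * \<epsilon> ^ k"
    by simp
qed

end
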